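(* Let $N_{123},N_1,N_2,N_3\ge1$ dyadic, $m\in\mathbb Z$, $\pm_{123},\pm_1,\pm_2,\pm_3\in\{+,-\}$, and $\varphi(n_1,n_2,n_3)=\pm_{123}\langle n_{123}\rangle\pm_1\langle n_1\rangle\pm_2\langle n_2\rangle\pm_3\langle n_3\rangle$. Then for all $0<\gamma<\beta$, $$\sup_{n_2\in\mathbb Z^3:\,|n_2|\sim N_2}\ \sum_{n_1,n_3\in\mathbb Z^3}\Big(\prod_{j=1,3}1\{|n_j|\sim N_j\}\Big)\langle n_{123}\rangle^{2(s_2-1)}\langle n_{12}\rangle^{-2\beta}\langle n_1\rangle^{-2}\langle n_3\rangle^{-2}1\{|\varphi-m|\le1\}\lesssim\max(N_1,N_2,N_3)^{2\delta_2}N_1^{-2\gamma}N_2^{2\gamma}.$$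
   Context: $\langle n\rangle=(1+|n|^2)^{1/2}$, $n_{12}=n_1+n_2$, $n_{123}=n_1+n_2+n_3$. $0<\beta<1/2$ is the fixed parameter of the interaction potential (standing assumption); $\delta_2>0$ is a small fixed parameter and $s_2=1/2+\delta_2$. "$|x|\sim N$" means $c^{-1}N\le|x|\le cN$ for a fixed absolute $c$ (and $|x|\le c$ when $N=1$). The implicit constant depends only on $\beta,\gamma,\delta_2$. *)

theory Defs
  imports Complex_Main
begin

type_synonym zvec = "int \<times> int \<times> int"

definition vadd :: "zvec \<Rightarrow> zvec \<Rightarrow> zvec" where
  "vadd x y = (fst x + fst y, fst (snd x) + fst (snd y), snd (snd x) + snd (snd y))"

definition znorm :: "zvec \<Rightarrow> real" where
  "znorm x = sqrt (real_of_int (fst x)^2 + real_of_int (fst (snd x))^2 + real_of_int (snd (snd x))^2)"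

definition jbr :: "zvec \<Rightarrow> real" where
  "jbr x = sqrt (1 + (znorm x)^2)"

definition sim :: "real \<Rightarrow> zvec \<Rightarrow> real \<Rightarrow> bool" where
  "sim c x N = (if N = 1 then znorm x \<le> c else N / c \<le> znorm x \<and> znorm x \<le> c * N)"

definition dyadic :: "real \<Rightarrow> bool" where
  "dyadic N = (\<exists>k::nat. N = 2 ^ k)"

text \<open>Phase function; signs are encoded as reals in {1,-1}.\<close>
definition phase :: "real \<Rightarrow> real \<Rightarrow> real \<Rightarrow> real \<Rightarrow> zvec \<Rightarrow> zvec \<Rightarrow> zvec \<Rightarrow> real" where
  "phase e123 e1 e2 e3 n1 n2 n3 =
     e123 * jbr (vadd (vadd n1 n2) n3) + e1 * jbr n1 + e2 * jbr n2 + e3 * jbr n3"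

end

theory Submission
  imports Defs "HOL-Analysis.Analysis"
begin

text \<open>
  For fixed n1 the resonance condition confines n3 to a lattice shell
  {x. |x| <= R, |<x> + e <x + a> - s| <= 1} with a = n1 + n2 and e = +1 or -1.
  After a rotation taking a to the first axis, the balls of radius 1/2 around its points are
  disjoint and lie in a continuous shell of thickness 2, so they are counted by its volume.
  The level sets of <p> + e <p + a> are ellipsoids or hyperboloids of revolution about that axis,
  so on each slice orthogonal to it the admissible values of |q|^2 form a short interval, and
  in the hyperbolic case the identity <(t + d, q)>^2 - <(t, q)>^2 = d (2 t + d) also confines
  the slice parameter t. This gives O(R^2 + R^3 / |a|) lattice points, and a dyadic decomposition turns
  it into a bound O(R^2 / <a>) for the sum of <n3 + a>^-1 over the shell. Bounding
  <n123>^(2 delta - 1) by M^(2 delta) <n123>^-1 and <nj>^-2 by Nj^-2, what remains is the sum of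
  <n1 + n2>^(-1 - 2 beta) over |n1| <~ N1, which is O(N1^(2 - 2 beta)); the surplus N1^(-2 beta)
  is at most N1^(-2 gamma) N2^(2 gamma).
\<close>

section \<open>Japanese brackets and lattice points\<close>

definition japanese_bracket :: "'a::real_normed_vector \<Rightarrow> real" where
  "japanese_bracket p = sqrt (1 + (norm p)\<^sup>2)"

lemma japanese_bracket_eq_norm_Pair: "japanese_bracket p = norm (1::real, p)"
  by (simp add: japanese_bracket_def norm_Pair)

lemma japanese_bracket_cong_norm: "norm p = norm q \<Longrightarrow> japanese_bracket p = japanese_bracket q"
  by (simp add: japanese_bracket_def)

lemma japanese_bracket_ge_1: "1 \<le> japanese_bracket p"
  by (simp add: japanese_bracket_def)

lemma japanese_bracket_pos: "0 < japanese_bracket p"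
  using japanese_bracket_ge_1[of p] by linarith

lemma norm_le_japanese_bracket: "norm p \<le> japanese_bracket p"
  unfolding japanese_bracket_def by (rule real_le_rsqrt) simp

lemma japanese_bracket_lipschitz: "\<bar>japanese_bracket p - japanese_bracket q\<bar> \<le> norm (p - q)"
proof -
  have "\<bar>norm (1::real, p) - norm (1::real, q)\<bar> \<le> norm ((1::real, p) - (1, q))"
    by (rule norm_triangle_ineq3)
  then show ?thesis
    by (simp add: japanese_bracket_eq_norm_Pair norm_Pair)
qed

lemma japanese_bracket_le_1_plus_norm: "japanese_bracket p \<le> 1 + norm p"
  using japanese_bracket_lipschitz[of p 0] by (simp add: japanese_bracket_def)

lemma japanese_bracket_le_sqrt2_max: "japanese_bracket p \<le> sqrt 2 * max 1 (norm p)"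
proof -
  have "1 + (norm p)\<^sup>2 \<le> 2 * (max 1 (norm p))\<^sup>2"
  proof (cases "norm p \<le> 1")
    case True
    then have "norm p * norm p \<le> 1"
      by (intro mult_le_one) auto
    then show ?thesis
      using True by (simp add: max_def power2_eq_square)
  next
    case False
    then have "1 * 1 \<le> norm p * norm p"
      by (intro mult_mono) auto
    then show ?thesis
      using False by (simp add: max_def power2_eq_square)
  qed
  then have "japanese_bracket p \<le> sqrt (2 * (max 1 (norm p))\<^sup>2)"
    unfolding japanese_bracket_def by (rule real_sqrt_le_mono)
  then show ?thesis
    by (simp add: real_sqrt_mult)
qed

lemma japanese_bracket_powr_div_max_le:
  fixes p :: "'a::real_normed_vector"
  shows "japanese_bracket p powr (-2 * \<beta>) / max 1 (norm p) \<le> sqrt 2 * japanese_bracket p powr (-(1 + 2 * \<beta>))"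
proof -
  let ?J = "japanese_bracket p"
  have J: "0 < ?J"
    by (rule japanese_bracket_pos)
  have "-(1 + 2 * \<beta>) = -2 * \<beta> - 1"
    by simp
  then have exponent: "?J powr (-2 * \<beta>) / ?J powr 1 = ?J powr (-(1 + 2 * \<beta>))"
    by (simp only: powr_diff)
  have "1 / max 1 (norm p) \<le> sqrt 2 / ?J"
    using japanese_bracket_le_sqrt2_max[of p] J by (simp add: field_simps)
  then have "?J powr (-2 * \<beta>) * (1 / max 1 (norm p)) \<le> ?J powr (-2 * \<beta>) * (sqrt 2 / ?J)"
    by (rule mult_left_mono) simp
  also have "\<dots> = sqrt 2 * (?J powr (-2 * \<beta>) / ?J powr 1)"
    using J by simp
  finally show ?thesis
    unfolding exponent by simp
qed

definition of_zvec :: "zvec \<Rightarrow> real \<times> real \<times> real" where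
  "of_zvec x = (of_int (fst x), of_int (fst (snd x)), of_int (snd (snd x)))"

lemma of_zvec_add [simp]: "of_zvec (x + y) = of_zvec x + of_zvec y"
  and of_zvec_diff [simp]: "of_zvec (x - y) = of_zvec x - of_zvec y"
  and of_zvec_minus [simp]: "of_zvec (- x) = - of_zvec x"
  by (simp_all add: of_zvec_def)

lemma vadd_eq_plus: "vadd x y = x + y"
  by (cases x; cases y) (simp add: vadd_def)

lemma znorm_eq_norm_of_zvec: "znorm x = norm (of_zvec x)"
  by (simp add: znorm_def of_zvec_def norm_Pair add.assoc)

lemma jbr_eq_japanese_bracket: "jbr x = japanese_bracket (of_zvec x)"
  by (simp add: jbr_def japanese_bracket_def znorm_eq_norm_of_zvec)

lemma abs_coordinates_le_norm:
  fixes a b c :: real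
  shows "\<bar>a\<bar> \<le> norm (a, b, c)" "\<bar>b\<bar> \<le> norm (a, b, c)" "\<bar>c\<bar> \<le> norm (a, b, c)"
  unfolding norm_Pair by (auto intro!: real_le_rsqrt simp: power2_eq_square)

lemma one_le_norm_of_zvec_diff:
  assumes "x \<noteq> y"
  shows "1 \<le> norm (of_zvec x - of_zvec y)"
proof -
  obtain a b c where abc: "x - y = (a, b, c)"
    by (metis prod.exhaust)
  moreover have "x - y \<noteq> 0"
    using assms by simp
  ultimately have "a \<noteq> 0 \<or> b \<noteq> 0 \<or> c \<noteq> 0"
    by (auto simp: zero_prod_def)
  then have "1 \<le> \<bar>real_of_int a\<bar> \<or> 1 \<le> \<bar>real_of_int b\<bar> \<or> 1 \<le> \<bar>real_of_int c\<bar>"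
    by linarith
  moreover have "of_zvec x - of_zvec y = (of_int a, of_int b, of_int c)"
    using abc of_zvec_diff[of x y] by (simp add: of_zvec_def)
  ultimately show ?thesis
    using abs_coordinates_le_norm[where a = "of_int a" and b = "of_int b" and c = "of_int c"]
    by auto
qed

lemma one_le_norm_of_zvec: "x \<noteq> 0 \<Longrightarrow> 1 \<le> norm (of_zvec x)"
  using one_le_norm_of_zvec_diff[of x 0] by (simp add: of_zvec_def zero_prod_def)

lemma lattice_ball_subset_cube:
  "{x. norm (of_zvec x) \<le> L} \<subseteq> {-\<lfloor>L\<rfloor>..\<lfloor>L\<rfloor>} \<times> {-\<lfloor>L\<rfloor>..\<lfloor>L\<rfloor>} \<times> {-\<lfloor>L\<rfloor>..\<lfloor>L\<rfloor>}"
proof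
  fix x assume "x \<in> {x. norm (of_zvec x) \<le> L}"
  moreover obtain a b c where x: "x = (a, b, c)"
    by (metis prod.exhaust)
  ultimately have "\<bar>real_of_int a\<bar> \<le> L" "\<bar>real_of_int b\<bar> \<le> L" "\<bar>real_of_int c\<bar> \<le> L"
    using abs_coordinates_le_norm[where a = "of_int a" and b = "of_int b" and c = "of_int c"]
    by (auto simp: of_zvec_def)
  then have "\<bar>a\<bar> \<le> \<lfloor>L\<rfloor>" "\<bar>b\<bar> \<le> \<lfloor>L\<rfloor>" "\<bar>c\<bar> \<le> \<lfloor>L\<rfloor>"
    by (simp_all add: le_floor_iff)
  then show "x \<in> {-\<lfloor>L\<rfloor>..\<lfloor>L\<rfloor>} \<times> {-\<lfloor>L\<rfloor>..\<lfloor>L\<rfloor>} \<times> {-\<lfloor>L\<rfloor>..\<lfloor>L\<rfloor>}"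
    unfolding x by (auto simp: abs_le_iff)
qed

lemma finite_lattice_ball: "finite {x. norm (of_zvec x) \<le> L}"
  by (rule finite_subset[OF lattice_ball_subset_cube]) auto

lemma card_lattice_ball_le:
  assumes "1 \<le> L"
  shows "real (card {x. norm (of_zvec x) \<le> L}) \<le> 27 * L ^ 3"
proof -
  let ?n = "\<lfloor>L\<rfloor>"
  have "card {x. norm (of_zvec x) \<le> L} \<le> card ({-?n..?n} \<times> {-?n..?n} \<times> {-?n..?n})"
    by (rule card_mono[OF _ lattice_ball_subset_cube]) auto
  also have "\<dots> = nat (2 * ?n + 1) ^ 3"
    by (simp add: card_cartesian_product power3_eq_cube)
  finally have "real (card {x. norm (of_zvec x) \<le> L}) \<le> real (nat (2 * ?n + 1)) ^ 3"
    by (metis of_nat_le_iff of_nat_power)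
  also have "real (nat (2 * ?n + 1)) \<le> 3 * L"
    using assms of_int_floor_le[of L] by linarith
  then have "real (nat (2 * ?n + 1)) ^ 3 \<le> (3 * L) ^ 3"
    by (intro power_mono) auto
  finally show ?thesis
    by (simp add: power_mult_distrib)
qed

lemma obtain_linear_isometry:
  fixes b c :: "'a::real_inner"
  assumes "norm b = norm c"
  obtains f where "linear f" "\<And>x. norm (f x) = norm x" "f b = c"
proof (cases "b = c")
  case True
  then show ?thesis
    using that[of "\<lambda>x. x"] linear_ident by simp
next
  case False
  define v where "v = b - c"
  \<comment> \<open>the reflection in the hyperplane orthogonal to b - c\<close>
  define f where "f x = x - (2 * inner v x / inner v v) *\<^sub>R v" for x
  have vv: "inner v v \<noteq> 0"
    using False by (simp add: v_def)
  show ?thesis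
  proof
    show "linear f"
      unfolding linear_iff f_def
      by (simp add: add_divide_distrib algebra_simps)
    show "norm (f x) = norm x" for x
    proof -
      have "inner (f x) (f x) = inner x x"
        using vv unfolding f_def
        by (simp add: inner_diff_left inner_diff_right inner_commute field_simps power2_eq_square)
      then show ?thesis
        by (simp add: norm_eq_sqrt_inner)
    qed
    have "inner c c = inner b b"
      using assms by (metis power2_norm_eq_inner)
    then have "inner v v = 2 * inner v b"
      unfolding v_def by (simp add: inner_diff_left inner_diff_right inner_commute)
    then show "f b = c"
      using vv by (simp add: f_def v_def)
  qed
qed

section \<open>Volume of shells\<close>

lemma emeasure_le_by_slices:
  fixes A :: "(real \<times> 'b::euclidean_space) set"
  assumes A: "A \<in> sets borel" and "0 \<le> c" "a \<le> b"
    and slice: "\<And>t. emeasure lborel {q. (t, q) \<in> A} \<le> ennreal c * indicator {a..b} t"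
  shows "emeasure lborel A \<le> ennreal (c * (b - a))"
proof -
  have sets: "sets (lborel \<Otimes>\<^sub>M lborel) = sets (lborel :: (real \<times> 'b) measure)"
    by (simp only: lborel_prod)
  have "emeasure (lborel :: (real \<times> 'b) measure) A = emeasure (lborel \<Otimes>\<^sub>M lborel) A"
    by (simp add: lborel_prod)
  also have "\<dots> = (\<integral>\<^sup>+t. emeasure lborel (Pair t -` A) \<partial>lborel)"
    by (rule lborel.emeasure_pair_measure_alt) (use A sets in simp)
  also have "\<dots> \<le> (\<integral>\<^sup>+t. ennreal c * indicator {a..b} t \<partial>lborel)"
    by (intro nn_integral_mono) (simp add: vimage_def slice)
  also have "\<dots> = ennreal c * emeasure lborel {a..b}"
    by (rule nn_integral_cmult_indicator) simp
  also have "\<dots> = ennreal (c * (b - a))"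
    using assms by (simp add: ennreal_mult)
  finally show ?thesis .
qed

lemma emeasure_le_of_norm_sq_mem:
  fixes S :: "(real \<times> real) set"
  assumes S: "S \<subseteq> {q. (norm q)\<^sup>2 \<in> W}" and W: "W \<subseteq> {0..}" and D: "0 \<le> D"
    and diam: "\<And>w w'. w \<in> W \<Longrightarrow> w' \<in> W \<Longrightarrow> w' - w \<le> D"
  shows "emeasure lborel S \<le> ennreal (2 * pi * D)"
proof (cases "W = {}")
  case True
  then show ?thesis
    using S by simp
next
  case False
  then obtain w0 where w0: "w0 \<in> W"
    by auto
  define r1 where "r1 = sqrt (max 0 (w0 - D))"
  define r2 where "r2 = sqrt (w0 + D)"
  have r: "0 \<le> r1" "r1 \<le> r2" "0 \<le> r2"
    using D w0 W unfolding r1_def r2_def by auto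
  have annulus: "S \<subseteq> cball 0 r2 - ball 0 r1"
  proof
    fix q assume "q \<in> S"
    then have "(norm q)\<^sup>2 \<in> W"
      using S by auto
    then have "(norm q)\<^sup>2 \<le> w0 + D" "max 0 (w0 - D) \<le> (norm q)\<^sup>2"
      using diam[OF w0] diam[OF _ w0] by force+
    then have "norm q \<le> r2" "r1 \<le> norm q"
      unfolding r1_def r2_def by (auto intro: real_le_rsqrt real_le_lsqrt)
    then show "q \<in> cball 0 r2 - ball 0 r1"
      by simp
  qed
  have "emeasure lborel S \<le> emeasure lborel (cball (0::real \<times> real) r2 - ball 0 r1)"
    using annulus by (intro emeasure_mono) auto
  also have "\<dots> = emeasure lborel (cball (0::real \<times> real) r2) - emeasure lborel (ball (0::real \<times> real) r1)"
    using r emeasure_lborel_ball_finite[of "0::real \<times> real" r1]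
    by (intro emeasure_Diff) (auto simp: emeasure_lborel_cball_finite top.not_eq_extremum)
  also have "\<dots> = ennreal (pi * r2\<^sup>2) - ennreal (pi * r1\<^sup>2)"
    using emeasure_cball[OF r(3), of "0::real \<times> real"] emeasure_ball[OF r(1), of "0::real \<times> real"]
    by (simp add: unit_ball_vol_2 mult.commute power2_eq_square)
  also have "\<dots> = ennreal (pi * (r2\<^sup>2 - r1\<^sup>2))"
    by (simp add: ennreal_minus right_diff_distrib)
  also have "pi * (r2\<^sup>2 - r1\<^sup>2) \<le> 2 * pi * D"
    using D w0 W unfolding r1_def r2_def by auto
  finally show ?thesis
    by (simp add: ennreal_leI)
qed

lemma emeasure_le_by_radial_slices:
  fixes A :: "(real \<times> (real \<times> real)) set" and W :: "real \<Rightarrow> real set"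
  assumes A: "A \<in> sets borel" and slice: "\<And>t q. (t, q) \<in> A \<Longrightarrow> (norm q)\<^sup>2 \<in> W t"
    and W: "\<And>t. W t \<subseteq> {0..}" and D: "0 \<le> D"
    and diam: "\<And>t w w'. w \<in> W t \<Longrightarrow> w' \<in> W t \<Longrightarrow> w \<le> w' \<Longrightarrow> w' - w \<le> D"
    and ab: "a \<le> b" and range: "\<And>t w. w \<in> W t \<Longrightarrow> a \<le> t \<and> t \<le> b"
  shows "emeasure lborel A \<le> ennreal (2 * pi * D * (b - a))"
proof (rule emeasure_le_by_slices[OF A _ ab])
  show "0 \<le> 2 * pi * D"
    using D by simp
  fix t
  show "emeasure lborel {q. (t, q) \<in> A} \<le> ennreal (2 * pi * D) * indicator {a..b} t"
  proof (cases "t \<in> {a..b}")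
    case True
    have "emeasure lborel {q. (t, q) \<in> A} \<le> ennreal (2 * pi * D)"
    proof (rule emeasure_le_of_norm_sq_mem[OF _ W D])
      show "w' - w \<le> D" if "w \<in> W t" "w' \<in> W t" for w w'
        using diam[OF that] D by (cases "w \<le> w'") auto
    qed (use slice in auto)
    then show ?thesis
      using True by simp
  next
    case False
    then have "{q. (t, q) \<in> A} = {}"
      using slice range by fastforce
    then show ?thesis
      by (simp only: emeasure_empty) simp
  qed
qed

definition shell :: "real \<Rightarrow> real \<Rightarrow> real \<Rightarrow> real \<Rightarrow> real \<Rightarrow> (real \<times> real \<times> real) set" where
  "shell d e s h L =
     {p. norm p \<le> L \<and> \<bar>japanese_bracket p + e * japanese_bracket (p + (d, 0)) - s\<bar> \<le> h}"

definition shell_slice_radii :: "real \<Rightarrow> real \<Rightarrow> real \<Rightarrow> real \<Rightarrow> real \<Rightarrow> real \<Rightarrow> real set" where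
  "shell_slice_radii d e s h L t = {w. 0 \<le> w \<and> t\<^sup>2 + w \<le> L\<^sup>2 \<and>
      \<bar>sqrt (1 + t\<^sup>2 + w) + e * sqrt (1 + (t + d)\<^sup>2 + w) - s\<bar> \<le> h}"

lemma closed_shell: "closed (shell d e s h L)"
  unfolding shell_def japanese_bracket_def
  by (intro closed_Collect_conj closed_Collect_le continuous_intros)

lemma shell_borel: "shell d e s h L \<in> sets borel"
  by (rule borel_closed[OF closed_shell])

lemma norm_sq_mem_shell_slice_radii:
  assumes "(t, q) \<in> shell d e s h L"
  shows "(norm q)\<^sup>2 \<in> shell_slice_radii d e s h L t"
proof -
  have "sqrt (t\<^sup>2 + (norm q)\<^sup>2) \<le> L"
    using assms by (simp add: shell_def norm_Pair)
  then have "t\<^sup>2 + (norm q)\<^sup>2 \<le> L\<^sup>2"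
    using sqrt_le_D by blast
  then show ?thesis
    using assms by (simp add: shell_def shell_slice_radii_def japanese_bracket_def norm_Pair add.assoc)
qed

lemma const_diff_squares_increment_le:
  fixes P1 P2 Q1 Q2 h \<mu> s :: real
  assumes "0 < Q1" "0 < P1" "Q1 \<le> Q2" "P1 \<le> P2" "P1\<^sup>2 - Q1\<^sup>2 = P2\<^sup>2 - Q2\<^sup>2"
    "\<bar>P1 - Q1 - s\<bar> \<le> h" "\<bar>P2 - Q2 - s\<bar> \<le> h" "\<mu> \<le> \<bar>P1 - Q1\<bar>"
  shows "\<mu> * (Q2 - Q1) \<le> 2 * h * (P2 + Q2)"
proof -
  \<comment> \<open>(P - Q)(P + Q) is the same at both points, so P - Q shrinks in proportion as P + Q grows\<close>
  have "((P1 - Q1) - (P2 - Q2)) * (P2 + Q2) = (P1 - Q1) * ((P2 + Q2) - (P1 + Q1))"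
    using assms(5) by (simp add: power2_eq_square algebra_simps)
  moreover have "0 \<le> P2 + Q2" "0 \<le> (P2 + Q2) - (P1 + Q1)"
    using assms(1-4) by linarith+
  ultimately have "\<bar>(P1 - Q1) - (P2 - Q2)\<bar> * (P2 + Q2) = \<bar>P1 - Q1\<bar> * ((P2 + Q2) - (P1 + Q1))"
    by (metis abs_mult abs_of_nonneg)
  moreover have "\<mu> * (Q2 - Q1) \<le> \<bar>P1 - Q1\<bar> * ((P2 + Q2) - (P1 + Q1))"
    using assms(3,4,8) by (intro mult_mono) auto
  moreover have "\<bar>(P1 - Q1) - (P2 - Q2)\<bar> * (P2 + Q2) \<le> 2 * h * (P2 + Q2)"
    using assms by (intro mult_right_mono) auto
  ultimately show ?thesis
    by linarith
qed

locale shell_geometry =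
  fixes d e s h L :: real
  assumes L: "1 \<le> L" and d: "0 < d" and h: "0 \<le> h"
begin

text \<open>For w = |q|^2, Q t w and P t w are the Japanese brackets of (t, q) and (t + d, q).\<close>
definition Q :: "real \<Rightarrow> real \<Rightarrow> real" where "Q t w = sqrt (1 + t\<^sup>2 + w)"
definition P :: "real \<Rightarrow> real \<Rightarrow> real" where "P t w = sqrt (1 + (t + d)\<^sup>2 + w)"
abbreviation W :: "real \<Rightarrow> real set" where "W \<equiv> shell_slice_radii d e s h L"

lemma Q_sq: "0 \<le> w \<Longrightarrow> (Q t w)\<^sup>2 = 1 + t\<^sup>2 + w"
  and P_sq: "0 \<le> w \<Longrightarrow> (P t w)\<^sup>2 = 1 + (t + d)\<^sup>2 + w"
  by (simp_all add: Q_def P_def)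

lemma Q_mono: "w \<le> w' \<Longrightarrow> Q t w \<le> Q t w'"
  and P_mono: "w \<le> w' \<Longrightarrow> P t w \<le> P t w'"
  by (simp_all add: Q_def P_def)

lemma Q_increment_mult:
  assumes "0 \<le> w" "0 \<le> w'"
  shows "(Q t w' - Q t w) * (Q t w' + Q t w) = w' - w"
proof -
  have "(Q t w' - Q t w) * (Q t w' + Q t w) = (Q t w')\<^sup>2 - (Q t w)\<^sup>2"
    by (simp add: power2_eq_square algebra_simps)
  then show ?thesis
    using assms by (simp add: Q_sq)
qed

lemma P_minus_Q_mult_P_plus_Q:
  assumes "0 \<le> w"
  shows "(P t w - Q t w) * (P t w + Q t w) = d * (2 * t + d)"
proof -
  have "(P t w - Q t w) * (P t w + Q t w) = (P t w)\<^sup>2 - (Q t w)\<^sup>2"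
    by (simp add: power2_eq_square algebra_simps)
  also have "\<dots> = (1 + (t + d)\<^sup>2 + w) - (1 + t\<^sup>2 + w)"
    using assms by (simp add: P_sq Q_sq)
  also have "\<dots> = d * (2 * t + d)"
    by (simp add: power2_eq_square algebra_simps)
  finally show ?thesis .
qed

lemma slice_radiiD:
  assumes "w \<in> W t"
  shows "0 \<le> w" "w \<le> L\<^sup>2" "\<bar>t\<bar> \<le> L" "1 \<le> Q t w" "Q t w \<le> 1 + L" "0 < P t w"
    "P t w \<le> 1 + L + d" "\<bar>Q t w + e * P t w - s\<bar> \<le> h"
proof -
  have w: "0 \<le> w" and tw: "t\<^sup>2 + w \<le> L\<^sup>2"
    using assms by (auto simp: shell_slice_radii_def)
  show "0 \<le> w" "\<bar>Q t w + e * P t w - s\<bar> \<le> h"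
    using assms by (auto simp: shell_slice_radii_def Q_def P_def)
  show "w \<le> L\<^sup>2"
    using tw zero_le_power2[of t] by linarith
  have "\<bar>t\<bar> \<le> \<bar>L\<bar>"
    using tw w by (simp add: abs_le_square_iff)
  then show t: "\<bar>t\<bar> \<le> L"
    using L by simp
  show "1 \<le> Q t w" "0 < P t w"
    using w by (simp_all add: Q_def P_def add_pos_nonneg)
  show "Q t w \<le> 1 + L"
    unfolding Q_def using tw L by (intro real_le_lsqrt) (auto simp: power2_eq_square algebra_simps)
  have "t * d \<le> L * d"
    using t d by (intro mult_right_mono) auto
  moreover have "(t + d)\<^sup>2 = t\<^sup>2 + 2 * (t * d) + d\<^sup>2"
    "(1 + L + d)\<^sup>2 = 1 + L\<^sup>2 + d\<^sup>2 + 2 * L + 2 * d + 2 * (L * d)"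
    by (simp_all add: power2_eq_square algebra_simps)
  ultimately show "P t w \<le> 1 + L + d"
    unfolding P_def by (intro real_le_lsqrt) (use tw L d in linarith)+
qed

lemma ellipse_slice_diam:
  assumes "e = 1" "w \<in> W t" "w' \<in> W t" "w \<le> w'"
  shows "w' - w \<le> 8 * h * L"
proof -
  note b = slice_radiiD[OF assms(2)] and b' = slice_radiiD[OF assms(3)]
  have "Q t w' - Q t w \<le> 2 * h"
    using b(8) b'(8) assms(1) P_mono[OF assms(4), of t] by simp
  moreover have "Q t w' + Q t w \<le> 2 * (1 + L)"
    using b(5) b'(5) by simp
  ultimately have "(Q t w' - Q t w) * (Q t w' + Q t w) \<le> 2 * h * (2 * (1 + L))"
    using Q_mono[OF assms(4), of t] b(4) h by (intro mult_mono) auto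
  also have "\<dots> \<le> 8 * h * L"
    using mult_left_mono[OF L h] by (simp add: algebra_simps)
  finally show ?thesis
    using Q_increment_mult[OF b(1) b'(1)] by simp
qed

lemma hyperbola_slice_diam:
  assumes "e = -1" "w \<in> W t" "w' \<in> W t" "w \<le> w'" "\<mu> \<le> \<bar>P t w - Q t w\<bar>"
  shows "\<mu> * (w' - w) \<le> 4 * h * (2 + 2 * L + d) * (1 + L)"
proof -
  note b = slice_radiiD[OF assms(2)] and b' = slice_radiiD[OF assms(3)]
  have "\<mu> * (Q t w' - Q t w) \<le> 2 * h * (P t w' + Q t w')"
  proof (rule const_diff_squares_increment_le)
    show "(P t w)\<^sup>2 - (Q t w)\<^sup>2 = (P t w')\<^sup>2 - (Q t w')\<^sup>2"
      using b(1) b'(1) by (simp add: P_sq Q_sq)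
    show "\<bar>P t w - Q t w - - s\<bar> \<le> h" "\<bar>P t w' - Q t w' - - s\<bar> \<le> h"
      using b(8) b'(8) assms(1) by (simp_all add: abs_minus_commute)
  qed (use b assms(4,5) Q_mono P_mono in auto)
  also have "\<dots> \<le> 2 * h * (2 + 2 * L + d)"
    using b'(5,7) h by (intro mult_left_mono) auto
  finally have \<mu>: "\<mu> * (Q t w' - Q t w) \<le> 2 * h * (2 + 2 * L + d)" .
  have "\<mu> * (w' - w) = \<mu> * (Q t w' - Q t w) * (Q t w' + Q t w)"
    using Q_increment_mult[OF b(1) b'(1)] by (simp add: mult.assoc)
  also have "\<dots> \<le> 2 * h * (2 + 2 * L + d) * (2 * (1 + L))"
    by (rule mult_mono[OF \<mu>]) (use b(4,5) b'(4,5) h L d in auto)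
  also have "\<dots> = 4 * h * (2 + 2 * L + d) * (1 + L)"
    by simp
  finally show ?thesis .
qed

lemma far_hyperbola_gap:
  assumes "w \<in> W t" "4 * L \<le> d"
  shows "d / 4 \<le> \<bar>P t w - Q t w\<bar>"
proof -
  note b = slice_radiiD[OF assms(1)]
  have "d * (d / 2) \<le> d * (2 * t + d)"
    using b(3) assms(2) d by (intro mult_left_mono) auto
  also have "\<dots> = (P t w - Q t w) * (P t w + Q t w)"
    using P_minus_Q_mult_P_plus_Q[OF b(1)] by simp
  also have "\<dots> \<le> \<bar>P t w - Q t w\<bar> * (2 * d)"
    using b(4-7) assms(2) L by (intro mult_mono) auto
  finally show ?thesis
    using d by (simp add: field_simps)
qed

lemma hyperbola_gap:
  assumes "e = -1" "w \<in> W t"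
  shows "\<bar>s\<bar> - h \<le> \<bar>P t w - Q t w\<bar>" "\<bar>P t w - Q t w\<bar> \<le> \<bar>s\<bar> + h"
proof -
  have "\<bar>Q t w - P t w - s\<bar> \<le> h"
    using slice_radiiD(8)[OF assms(2)] assms(1) by simp
  then show "\<bar>s\<bar> - h \<le> \<bar>P t w - Q t w\<bar>" "\<bar>P t w - Q t w\<bar> \<le> \<bar>s\<bar> + h"
    by linarith+
qed

lemma hyperbola_slice_location:
  assumes "e = -1" "w \<in> W t"
  shows "d * \<bar>2 * t + d\<bar> \<le> (\<bar>s\<bar> + h) * (2 + 2 * L + d)"
proof -
  note b = slice_radiiD[OF assms(2)]
  have "d * \<bar>2 * t + d\<bar> = \<bar>(P t w - Q t w) * (P t w + Q t w)\<bar>"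
    using P_minus_Q_mult_P_plus_Q[OF b(1)] d by (simp add: abs_mult)
  also have "\<dots> = \<bar>P t w - Q t w\<bar> * (P t w + Q t w)"
    using b(4,6) by (simp add: abs_mult)
  also have "\<dots> \<le> (\<bar>s\<bar> + h) * (2 + 2 * L + d)"
    using b(4-7) hyperbola_gap(2)[OF assms] h by (intro mult_mono) auto
  finally show ?thesis .
qed


lemma emeasure_shell_le_by_slices:
  assumes "0 \<le> D" "\<And>t w w'. w \<in> W t \<Longrightarrow> w' \<in> W t \<Longrightarrow> w \<le> w' \<Longrightarrow> w' - w \<le> D"
    and "a \<le> b" "\<And>t w. w \<in> W t \<Longrightarrow> a \<le> t \<and> t \<le> b"
  shows "emeasure lborel (shell d e s h L) \<le> ennreal (2 * pi * D * (b - a))"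
proof (rule emeasure_le_by_radial_slices[where W = W])
  show "W t \<subseteq> {0..}" for t
    by (auto simp: shell_slice_radii_def)
qed (use assms shell_borel norm_sq_mem_shell_slice_radii in auto)

lemma emeasure_shell_le_by_centred_slices:
  assumes "0 \<le> D" "\<And>t w w'. w \<in> W t \<Longrightarrow> w' \<in> W t \<Longrightarrow> w \<le> w' \<Longrightarrow> w' - w \<le> D"
  shows "emeasure lborel (shell d e s h L) \<le> ennreal (4 * pi * D * L)"
proof -
  have "emeasure lborel (shell d e s h L) \<le> ennreal (2 * pi * D * (L - - L))"
  proof (rule emeasure_shell_le_by_slices)
    fix t w assume "w \<in> W t"
    then show "- L \<le> t \<and> t \<le> L"
      using slice_radiiD(3)[of w t] by (auto simp: abs_le_iff)
  qed (use assms L in auto)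
  then show ?thesis
    by (simp add: mult_ac)
qed

lemma emeasure_hyperbolic_shell_le:
  assumes "e = -1" "0 \<le> D" "\<And>t w w'. w \<in> W t \<Longrightarrow> w' \<in> W t \<Longrightarrow> w \<le> w' \<Longrightarrow> w' - w \<le> D"
    and X: "(\<bar>s\<bar> + h) * (2 + 2 * L + d) \<le> X"
  shows "emeasure lborel (shell d e s h L) \<le> ennreal (2 * pi * D * (X / d))"
proof -
  have "0 \<le> (\<bar>s\<bar> + h) * (2 + 2 * L + d)"
    using h L d by (intro mult_nonneg_nonneg) auto
  then have "0 \<le> X"
    using X by linarith
  have "emeasure lborel (shell d e s h L) \<le> ennreal (2 * pi * D * ((- d + X / d) / 2 - (- d - X / d) / 2))"
  proof (rule emeasure_shell_le_by_slices[OF assms(2,3)])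
    show "(- d - X / d) / 2 \<le> (- d + X / d) / 2"
      using \<open>0 \<le> X\<close> d by simp
    fix t w assume "w \<in> W t"
    then have "d * \<bar>2 * t + d\<bar> \<le> X"
      using hyperbola_slice_location[OF assms(1)] X by (meson order_trans)
    then have "\<bar>2 * t + d\<bar> \<le> X / d"
      using d by (simp add: field_simps)
    then show "(- d - X / d) / 2 \<le> t \<and> t \<le> (- d + X / d) / 2"
      by (auto simp: abs_le_iff)
  qed
  also have "(- d + X / d) / 2 - (- d - X / d) / 2 = X / d"
    by (simp add: field_simps)
  finally show ?thesis .
qed

lemma emeasure_ellipsoidal_shell_le:
  assumes "e = 1"
  shows "emeasure lborel (shell d e s h L) \<le> ennreal (32 * pi * h * L\<^sup>2)"
proof -
  have "emeasure lborel (shell d e s h L) \<le> ennreal (4 * pi * (8 * h * L) * L)"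
    by (rule emeasure_shell_le_by_centred_slices) (use ellipse_slice_diam[OF assms] h L in auto)
  also have "4 * pi * (8 * h * L) * L = 32 * pi * h * L\<^sup>2"
    by (simp add: power2_eq_square)
  finally show ?thesis .
qed

lemma emeasure_far_hyperbolic_shell_le:
  assumes "e = -1" "4 * L \<le> d"
  shows "emeasure lborel (shell d e s h L) \<le> ennreal (256 * pi * h * L\<^sup>2)"
proof -
  have "emeasure lborel (shell d e s h L) \<le> ennreal (4 * pi * (64 * h * L) * L)"
  proof (rule emeasure_shell_le_by_centred_slices)
    fix t w w' assume w: "w \<in> W t" "w' \<in> W t" "w \<le> w'"
    have "d / 4 * (w' - w) \<le> 4 * h * (2 + 2 * L + d) * (1 + L)"
      by (rule hyperbola_slice_diam[OF assms(1) w far_hyperbola_gap[OF w(1) assms(2)]])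
    also have "\<dots> \<le> 4 * h * (2 * d) * (2 * L)"
      using h L assms(2) by (intro mult_mono) auto
    finally have "d * (w' - w) \<le> d * (64 * h * L)"
      by (simp add: algebra_simps)
    then show "w' - w \<le> 64 * h * L"
      using d by simp
  qed (use h L in auto)
  also have "4 * pi * (64 * h * L) * L = 256 * pi * h * L\<^sup>2"
    by (simp add: power2_eq_square)
  finally show ?thesis .
qed

lemma emeasure_near_hyperbolic_shell_le_small_level:
  assumes "e = -1" "d < 4 * L" "\<bar>s\<bar> \<le> 2 * h"
  shows "emeasure lborel (shell d e s h L) \<le> ennreal (48 * pi * h * (L ^ 3 / d))"
proof -
  have "emeasure lborel (shell d e s h L) \<le> ennreal (2 * pi * L\<^sup>2 * (24 * h * L / d))"
  proof (rule emeasure_hyperbolic_shell_le[OF assms(1)])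
    show "w' - w \<le> L\<^sup>2" if "w \<in> W t" "w' \<in> W t" for t w w'
      using slice_radiiD(1)[OF that(1)] slice_radiiD(2)[OF that(2)] by linarith
    show "(\<bar>s\<bar> + h) * (2 + 2 * L + d) \<le> 24 * h * L"
      using mult_mono[of "\<bar>s\<bar> + h" "3 * h" "2 + 2 * L + d" "8 * L"] assms h L d by auto
  qed simp
  also have "2 * pi * L\<^sup>2 * (24 * h * L / d) = 48 * pi * h * (L ^ 3 / d)"
    by (simp add: power2_eq_square power3_eq_cube)
  finally show ?thesis .
qed

lemma emeasure_near_hyperbolic_shell_le_large_level:
  assumes "e = -1" "d < 4 * L" "2 * h < \<bar>s\<bar>"
  shows "emeasure lborel (shell d e s h L) \<le> ennreal (3072 * pi * h * (L ^ 3 / d))"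
proof -
  define \<mu> where "\<mu> = \<bar>s\<bar> - h"
  have \<mu>: "0 < \<mu>" "\<bar>s\<bar> + h \<le> 3 * \<mu>"
    using assms h unfolding \<mu>_def by auto
  have "emeasure lborel (shell d e s h L)
      \<le> ennreal (2 * pi * (64 * h * L\<^sup>2 / \<mu>) * ((\<bar>s\<bar> + h) * (8 * L) / d))"
  proof (rule emeasure_hyperbolic_shell_le[OF assms(1)])
    fix t w w' assume w: "w \<in> W t" "w' \<in> W t" "w \<le> w'"
    have "\<mu> * (w' - w) \<le> 4 * h * (2 + 2 * L + d) * (1 + L)"
      using hyperbola_slice_diam[OF assms(1) w] hyperbola_gap(1)[OF assms(1) w(1)]
      unfolding \<mu>_def by blast
    also have "\<dots> \<le> 4 * h * (8 * L) * (2 * L)"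
      using h L d assms(2) by (intro mult_mono) auto
    finally show "w' - w \<le> 64 * h * L\<^sup>2 / \<mu>"
      using \<mu>(1) by (simp add: field_simps power2_eq_square)
  next
    show "(\<bar>s\<bar> + h) * (2 + 2 * L + d) \<le> (\<bar>s\<bar> + h) * (8 * L)"
      using assms h L by (intro mult_left_mono) auto
  qed (use h \<mu> in simp)
  also have "2 * pi * (64 * h * L\<^sup>2 / \<mu>) * ((\<bar>s\<bar> + h) * (8 * L) / d) \<le> 3072 * pi * h * (L ^ 3 / d)"
  proof -
    have "2 * pi * (64 * h * L\<^sup>2 / \<mu>) * ((\<bar>s\<bar> + h) * (8 * L) / d)
        = 1024 * pi * h * (L ^ 3 / d) * ((\<bar>s\<bar> + h) / \<mu>)"
      using \<mu>(1) d by (simp add: field_simps power2_eq_square power3_eq_cube)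
    also have "\<dots> \<le> 1024 * pi * h * (L ^ 3 / d) * 3"
      using \<mu> h L d by (intro mult_left_mono) (auto simp: field_simps)
    finally show ?thesis
      by simp
  qed
  finally show ?thesis
    by (simp add: ennreal_leI)
qed

lemma emeasure_shell_le:
  assumes "e = 1 \<or> e = -1"
  shows "emeasure lborel (shell d e s h L) \<le> ennreal (3072 * pi * h * (L\<^sup>2 + L ^ 3 / d))"
proof -
  define x where "x = pi * h * L\<^sup>2"
  define y where "y = pi * h * (L ^ 3 / d)"
  have nonneg: "0 \<le> x" "0 \<le> y"
    using h L d by (simp_all add: x_def y_def)
  have scaled: "32 * pi * h * L\<^sup>2 = 32 * x" "256 * pi * h * L\<^sup>2 = 256 * x"
    "48 * pi * h * (L ^ 3 / d) = 48 * y" "3072 * pi * h * (L ^ 3 / d) = 3072 * y"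
    by (simp_all add: x_def y_def)
  have xy: "32 * pi * h * L\<^sup>2 \<le> 3072 * x + 3072 * y" "256 * pi * h * L\<^sup>2 \<le> 3072 * x + 3072 * y"
    "48 * pi * h * (L ^ 3 / d) \<le> 3072 * x + 3072 * y" "3072 * pi * h * (L ^ 3 / d) \<le> 3072 * x + 3072 * y"
    unfolding scaled using nonneg by linarith+
  have "emeasure lborel (shell d e s h L) \<le> ennreal (3072 * x + 3072 * y)"
  proof -
    consider "e = 1" | "e = -1" "4 * L \<le> d" | "e = -1" "d < 4 * L" "\<bar>s\<bar> \<le> 2 * h"
      | "e = -1" "d < 4 * L" "2 * h < \<bar>s\<bar>"
      using assms by linarith
    then show ?thesis
    proof cases
      case 1
      show ?thesis
        by (rule order_trans[OF emeasure_ellipsoidal_shell_le[OF 1] ennreal_leI]) (use xy in simp)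
    next
      case 2
      show ?thesis
        by (rule order_trans[OF emeasure_far_hyperbolic_shell_le[OF 2] ennreal_leI]) (use xy in simp)
    next
      case 3
      show ?thesis
        by (rule order_trans[OF emeasure_near_hyperbolic_shell_le_small_level[OF 3] ennreal_leI])
          (use xy in simp)
    next
      case 4
      show ?thesis
        by (rule order_trans[OF emeasure_near_hyperbolic_shell_le_large_level[OF 4] ennreal_leI])
          (use xy in simp)
    qed
  qed
  then show ?thesis
    by (simp add: x_def y_def algebra_simps)
qed

end

section \<open>Lattice points in shells\<close>

lemma card_le_emeasure_of_separated:
  fixes q :: "'a \<Rightarrow> 'b::euclidean_space"
  assumes F: "finite F" and sep: "\<And>x y. x \<in> F \<Longrightarrow> y \<in> F \<Longrightarrow> x \<noteq> y \<Longrightarrow> 1 \<le> dist (q x) (q y)"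
    and A: "A \<in> sets lborel" and balls: "\<And>x. x \<in> F \<Longrightarrow> ball (q x) (1/2) \<subseteq> A"
  shows "ennreal (real (card F) * (unit_ball_vol DIM('b) / 2 ^ DIM('b))) \<le> emeasure lborel A"
proof -
  have "disjoint_family_on (\<lambda>x. ball (q x) (1/2)) F"
    unfolding disjoint_family_on_def
  proof (intro ballI impI equals0I)
    fix x y z assume xy: "x \<in> F" "y \<in> F" "x \<noteq> y" and "z \<in> ball (q x) (1/2) \<inter> ball (q y) (1/2)"
    then have "dist (q x) z < 1/2" "dist (q y) z < 1/2"
      by auto
    then have "dist (q x) (q y) < 1"
      using dist_triangle[of "q x" "q y" z] by (simp add: dist_commute)
    with sep[OF xy] show False
      by simp
  qed
  then have "(\<Sum>x\<in>F. emeasure lborel (ball (q x) (1/2))) = emeasure lborel (\<Union>x\<in>F. ball (q x) (1/2))"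
    by (intro sum_emeasure F) auto
  also have "\<dots> \<le> emeasure lborel A"
    using balls A by (intro emeasure_mono) auto
  finally have "(\<Sum>x\<in>F. ennreal (unit_ball_vol DIM('b) / 2 ^ DIM('b))) \<le> emeasure lborel A"
    by (simp add: emeasure_ball power_one_over)
  then show ?thesis
    using ennreal_mult[of "real (card F)" "unit_ball_vol DIM('b) / 2 ^ DIM('b)"]
    by (simp add: ennreal_of_nat_eq_real_of_nat)
qed

lemma ball_subset_shell:
  fixes p :: "real \<times> real \<times> real"
  assumes e: "e = 1 \<or> e = -1" and p: "norm p \<le> L"
    and level: "\<bar>japanese_bracket p + e * japanese_bracket (p + (d, 0)) - s\<bar> \<le> 1"
  shows "ball p (1/2) \<subseteq> shell d e s 2 (L + 1)"
proof
  fix z assume "z \<in> ball p (1/2)"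
  then have z: "norm (z - p) < 1/2"
    by (simp add: dist_norm norm_minus_commute)
  have "norm z \<le> L + 1"
    using p z norm_triangle_ineq2[of z p] by linarith
  moreover have "\<bar>japanese_bracket z - japanese_bracket p\<bar> \<le> norm (z - p)"
    by (rule japanese_bracket_lipschitz)
  moreover have "\<bar>e * japanese_bracket (z + (d, 0)) - e * japanese_bracket (p + (d, 0))\<bar> \<le> norm (z - p)"
    using e japanese_bracket_lipschitz[of "z + (d, 0)" "p + (d, 0)"]
    by (auto simp: abs_minus_commute)
  ultimately show "z \<in> shell d e s 2 (L + 1)"
    using level z by (simp add: shell_def)
qed

definition lattice_shell :: "zvec \<Rightarrow> real \<Rightarrow> real \<Rightarrow> real \<Rightarrow> zvec set" where
  "lattice_shell a e s L = {x. norm (of_zvec x) \<le> L \<and>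
     \<bar>japanese_bracket (of_zvec x) + e * japanese_bracket (of_zvec x + of_zvec a) - s\<bar> \<le> 1}"

lemma finite_lattice_shell: "finite (lattice_shell a e s L)"
  by (rule finite_subset[OF _ finite_lattice_ball]) (auto simp: lattice_shell_def)

lemma card_lattice_shell_le_emeasure_shell:
  fixes f :: "real \<times> real \<times> real \<Rightarrow> real \<times> real \<times> real"
  assumes e: "e = 1 \<or> e = -1"
    and f: "linear f" "\<And>x. norm (f x) = norm x" "f (of_zvec a) = (d, 0)"
  shows "ennreal (real (card (lattice_shell a e s L)) * (pi / 6)) \<le> emeasure lborel (shell d e s 2 (L + 1))"
proof -
  define q where "q x = f (of_zvec x)" for x
  have "ennreal (real (card (lattice_shell a e s L))
        * (unit_ball_vol DIM(real \<times> real \<times> real) / 2 ^ DIM(real \<times> real \<times> real)))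
      \<le> emeasure lborel (shell d e s 2 (L + 1))"
  proof (rule card_le_emeasure_of_separated[OF finite_lattice_shell])
    fix x y :: zvec assume "x \<noteq> y"
    then show "1 \<le> dist (q x) (q y)"
      using one_le_norm_of_zvec_diff[of x y] f(2)[of "of_zvec x - of_zvec y"]
      by (simp add: q_def dist_norm linear_diff[OF f(1)])
  next
    show "shell d e s 2 (L + 1) \<in> sets lborel"
      unfolding sets_lborel by (rule shell_borel)
  next
    fix x assume x: "x \<in> lattice_shell a e s L"
    show "ball (q x) (1/2) \<subseteq> shell d e s 2 (L + 1)"
    proof (rule ball_subset_shell[OF e])
      have "q x + (d, 0) = f (of_zvec x + of_zvec a)"
        using f(3) by (simp add: q_def linear_add[OF f(1)])
      then have "japanese_bracket (q x + (d, 0)) = japanese_bracket (of_zvec x + of_zvec a)"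
        by (intro japanese_bracket_cong_norm) (simp add: f(2))
      moreover have "japanese_bracket (q x) = japanese_bracket (of_zvec x)"
        by (intro japanese_bracket_cong_norm) (simp add: q_def f(2))
      ultimately show "\<bar>japanese_bracket (q x) + e * japanese_bracket (q x + (d, 0)) - s\<bar> \<le> 1"
        using x by (simp add: lattice_shell_def)
      show "norm (q x) \<le> L"
        using x f(2) by (simp add: q_def lattice_shell_def)
    qed
  qed
  then show ?thesis
    by (simp add: unit_ball_vol_3)
qed

lemma card_lattice_shell_le:
  assumes e: "e = 1 \<or> e = -1" and L: "1 \<le> L" and a: "a \<noteq> 0"
  shows "real (card (lattice_shell a e s L)) \<le> 294912 * (L\<^sup>2 + L ^ 3 / norm (of_zvec a))"
proof -
  define d where "d = norm (of_zvec a)"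
  have d: "0 < d"
    using one_le_norm_of_zvec[OF a] unfolding d_def by linarith
  have "norm (of_zvec a) = norm ((d, 0) :: real \<times> real \<times> real)"
    using d by (simp add: d_def norm_Pair)
  then obtain f :: "real \<times> real \<times> real \<Rightarrow> real \<times> real \<times> real"
    where f: "linear f" "\<And>x. norm (f x) = norm x" "f (of_zvec a) = (d, 0)"
    using obtain_linear_isometry by blast
  have "shell_geometry d 2 (L + 1)"
    using L d by unfold_locales auto
  then have "emeasure lborel (shell d e s 2 (L + 1)) \<le> ennreal (3072 * pi * 2 * ((L + 1)\<^sup>2 + (L + 1) ^ 3 / d))"
    by (rule shell_geometry.emeasure_shell_le[OF _ e])
  with card_lattice_shell_le_emeasure_shell[OF e f]
  have "ennreal (real (card (lattice_shell a e s L)) * (pi / 6))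
      \<le> ennreal (3072 * pi * 2 * ((L + 1)\<^sup>2 + (L + 1) ^ 3 / d))"
    by (rule order_trans)
  then have "real (card (lattice_shell a e s L)) * (pi / 6) \<le> 6144 * pi * ((L + 1)\<^sup>2 + (L + 1) ^ 3 / d)"
    using L d by (subst (asm) ennreal_le_iff) auto
  also have "\<dots> \<le> 6144 * pi * (8 * (L\<^sup>2 + L ^ 3 / d))"
  proof -
    have "(L + 1)\<^sup>2 \<le> (2 * L)\<^sup>2" "(L + 1) ^ 3 \<le> (2 * L) ^ 3"
      using L by (intro power_mono; simp)+
    then have "(L + 1)\<^sup>2 + (L + 1) ^ 3 / d \<le> 4 * L\<^sup>2 + 8 * L ^ 3 / d"
      using d by (intro add_mono divide_right_mono) (simp_all add: power_mult_distrib)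
    also have "\<dots> \<le> 8 * (L\<^sup>2 + L ^ 3 / d)"
      by simp
    finally show ?thesis
      by (intro mult_left_mono) simp_all
  qed
  finally have "(pi / 6) * real (card (lattice_shell a e s L)) \<le> (pi / 6) * (294912 * (L\<^sup>2 + L ^ 3 / d))"
    by (simp add: mult.commute)
  then show ?thesis
    unfolding d_def by (simp add: mult_le_cancel_left_pos)
qed
lemma card_lattice_shell_le_max:
  assumes "e = 1 \<or> e = -1" "1 \<le> L"
  shows "real (card (lattice_shell a e s L)) \<le> 294912 * (L\<^sup>2 + L ^ 3 / max 1 (norm (of_zvec a)))"
proof (cases "a = 0")
  case True
  have "card (lattice_shell a e s L) \<le> card {x. norm (of_zvec x) \<le> L}"
    by (rule card_mono[OF finite_lattice_ball]) (auto simp: lattice_shell_def)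
  then have "real (card (lattice_shell a e s L)) \<le> 27 * L ^ 3"
    using card_lattice_ball_le[OF assms(2)] by linarith
  moreover have "0 \<le> L\<^sup>2" "0 \<le> L ^ 3"
    using assms(2) by simp_all
  ultimately show ?thesis
    using True by (simp add: of_zvec_def zero_prod_def, linarith)
next
  case False
  then show ?thesis
    using card_lattice_shell_le[OF assms False] one_le_norm_of_zvec[OF False] by simp
qed

lemma abs_sign_swap:
  fixes e u v s :: real
  assumes "e = 1 \<or> e = -1"
  shows "\<bar>u + e * v - s\<bar> = \<bar>v + e * u - e * s\<bar>"
  using assms by (auto simp: abs_minus_commute algebra_simps)

section \<open>Dyadic summation\<close>

lemma exists_pow2_bracket:
  fixes f :: real
  assumes "1 \<le> f" "f \<le> 2 ^ K"
  shows "\<exists>k\<le>K. f \<le> 2 ^ k \<and> 2 ^ k \<le> 2 * f"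
  using assms(2)
proof (induction K)
  case (Suc K)
  show ?case
  proof (cases "f \<le> 2 ^ K")
    case True
    then show ?thesis
      using Suc.IH le_SucI by blast
  next
    case False
    then show ?thesis
      using Suc.prems by (intro exI[of _ "Suc K"]) auto
  qed
qed (use assms(1) in auto)

lemma exists_pow2_between:
  fixes A :: real
  assumes "1 \<le> A"
  shows "\<exists>K. A \<le> 2 ^ K \<and> 2 ^ K \<le> 2 * A"
proof -
  obtain n where "A \<le> 2 ^ n"
    using real_arch_pow[of 2 A] by (auto intro: less_imp_le)
  then show ?thesis
    using exists_pow2_bracket[OF assms] by blast
qed

lemma sum_powr_le_dyadic_counts:
  fixes f :: "'a \<Rightarrow> real"
  assumes F: "finite F" and "0 \<le> \<rho>" and range: "\<And>x. x \<in> F \<Longrightarrow> 1 \<le> f x \<and> f x \<le> 2 ^ K"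
  shows "(\<Sum>x\<in>F. f x powr (-\<rho>))
    \<le> 2 powr \<rho> * (\<Sum>k\<le>K. (2 ^ k) powr (-\<rho>) * real (card {x\<in>F. f x \<le> 2 ^ k}))"
proof -
  let ?w = "\<lambda>x k. if f x \<le> 2 ^ k then ((2::real) ^ k) powr (-\<rho>) else 0"
  have "f x powr (-\<rho>) \<le> 2 powr \<rho> * (\<Sum>k\<le>K. ?w x k)" if x: "x \<in> F" for x
  proof -
    obtain k where k: "k \<le> K" "f x \<le> 2 ^ k" "2 ^ k \<le> 2 * f x"
      using exists_pow2_bracket range[OF x] by blast
    have "f x powr (-\<rho>) \<le> (2 ^ k / 2) powr (-\<rho>)"
      using k(3) assms(2) by (intro powr_mono2') auto
    also have "\<dots> = 2 powr \<rho> * ?w x k"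
      using k(2) by (simp add: powr_divide powr_minus field_simps)
    also have "?w x k \<le> (\<Sum>k\<le>K. ?w x k)"
      using k(1) by (intro member_le_sum) auto
    finally show ?thesis
      by simp
  qed
  then have "(\<Sum>x\<in>F. f x powr (-\<rho>)) \<le> (\<Sum>x\<in>F. 2 powr \<rho> * (\<Sum>k\<le>K. ?w x k))"
    by (rule sum_mono)
  also have "\<dots> = 2 powr \<rho> * (\<Sum>k\<le>K. \<Sum>x\<in>F. ?w x k)"
    by (simp add: sum_distrib_left sum.swap[of _ F])
  also have "(\<Sum>k\<le>K. \<Sum>x\<in>F. ?w x k) = (\<Sum>k\<le>K. (2 ^ k) powr (-\<rho>) * real (card {x\<in>F. f x \<le> 2 ^ k}))"
    using F by (simp add: sum.inter_filter[symmetric] mult.commute)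
  finally show ?thesis .
qed

lemma sum_power_le_twice_last:
  fixes q :: real
  assumes "2 \<le> q"
  shows "(\<Sum>k\<le>K. q ^ k) \<le> 2 * q ^ K"
proof (induction K)
  case (Suc K)
  then have "(\<Sum>k\<le>Suc K. q ^ k) \<le> 2 * q ^ K + q ^ Suc K"
    by simp
  also have "2 * q ^ K \<le> q ^ Suc K"
    using assms by (simp add: mult_right_mono)
  finally show ?case
    by simp
qed simp

lemma sum_inv_japanese_lattice_shell_le_far:
  assumes e: "e = 1 \<or> e = -1" and R: "1 \<le> R" and far: "2 * R < norm (of_zvec a)"
  shows "(\<Sum>x\<in>lattice_shell a e s R. 1 / japanese_bracket (of_zvec x + of_zvec a))
    \<le> 884736 * R\<^sup>2 / max 1 (norm (of_zvec a))"
proof -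
  define A where "A = norm (of_zvec a)"
  have A: "2 * R < A" "1 \<le> A" "max 1 A = A"
    using far R unfolding A_def by auto
  have summand_le: "1 / japanese_bracket (of_zvec x + of_zvec a) \<le> 2 / A" if "x \<in> lattice_shell a e s R" for x
  proof -
    have "A \<le> norm (of_zvec x + of_zvec a) + norm (of_zvec x)"
      unfolding A_def using norm_triangle_ineq4[of "of_zvec x + of_zvec a" "of_zvec x"] by simp
    moreover have "norm (of_zvec x) \<le> R"
      using that by (simp add: lattice_shell_def)
    ultimately have "A / 2 \<le> japanese_bracket (of_zvec x + of_zvec a)"
      using A norm_le_japanese_bracket[of "of_zvec x + of_zvec a"] by linarith
    then have "1 / japanese_bracket (of_zvec x + of_zvec a) \<le> 1 / (A / 2)"
      using A by (intro divide_left_mono) auto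
    then show ?thesis
      by simp
  qed
  have "(\<Sum>x\<in>lattice_shell a e s R. 1 / japanese_bracket (of_zvec x + of_zvec a))
      \<le> (\<Sum>x\<in>lattice_shell a e s R. 2 / A)"
    by (rule sum_mono) (rule summand_le)
  also have "\<dots> = real (card (lattice_shell a e s R)) * (2 / A)"
    by simp
  also have "\<dots> \<le> (294912 * (R\<^sup>2 + R ^ 3 / A)) * (2 / A)"
    using card_lattice_shell_le_max[OF e R, of a s] A unfolding A_def by (intro mult_right_mono) auto
  also have "\<dots> \<le> (294912 * (3 / 2 * R\<^sup>2)) * (2 / A)"
  proof -
    have "R ^ 3 / A \<le> R ^ 3 / (2 * R)"
      using A R by (intro divide_left_mono) auto
    also have "\<dots> = R\<^sup>2 / 2"
      using R by (simp add: power2_eq_square power3_eq_cube)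
    finally show ?thesis
      using A by (intro mult_right_mono) auto
  qed
  finally show ?thesis
    using A by (simp add: A_def)
qed

lemma card_lattice_shell_japanese_le:
  assumes e: "e = 1 \<or> e = -1"
  shows "card {x \<in> lattice_shell a e s R. japanese_bracket (of_zvec x + of_zvec a) \<le> T}
    \<le> card (lattice_shell (- a) e (e * s) T)"
proof (rule card_inj_on_le[where f = "\<lambda>x. x + a"])
  show "inj_on (\<lambda>x. x + a) {x \<in> lattice_shell a e s R. japanese_bracket (of_zvec x + of_zvec a) \<le> T}"
    by (auto intro: inj_onI)
  show "finite (lattice_shell (- a) e (e * s) T)"
    by (rule finite_lattice_shell)
  show "(\<lambda>x. x + a) ` {x \<in> lattice_shell a e s R. japanese_bracket (of_zvec x + of_zvec a) \<le> T}
      \<subseteq> lattice_shell (- a) e (e * s) T"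
  proof
    fix y assume "y \<in> (\<lambda>x. x + a) ` {x \<in> lattice_shell a e s R. japanese_bracket (of_zvec x + of_zvec a) \<le> T}"
    then obtain x where x: "x \<in> lattice_shell a e s R" "japanese_bracket (of_zvec x + of_zvec a) \<le> T"
      and y: "y = x + a"
      by blast
    have "norm (of_zvec (x + a)) \<le> T"
      using x(2) norm_le_japanese_bracket[of "of_zvec x + of_zvec a"] by simp
    moreover have "\<bar>japanese_bracket (of_zvec (x + a))
        + e * japanese_bracket (of_zvec (x + a) + of_zvec (- a)) - e * s\<bar> \<le> 1"
      using x(1) abs_sign_swap[OF e] by (simp add: lattice_shell_def)
    ultimately show "y \<in> lattice_shell (- a) e (e * s) T"
      by (simp add: lattice_shell_def y)
  qed
qed

lemma card_lattice_shell_japanese_le_pow2: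
  assumes e: "e = 1 \<or> e = -1"
  shows "(2 ^ k) powr (-1)
      * real (card {x \<in> lattice_shell a e s R. japanese_bracket (of_zvec x + of_zvec a) \<le> 2 ^ k})
    \<le> 294912 * (2 ^ k + 4 ^ k / max 1 (norm (of_zvec a)))"
proof -
  let ?m = "max 1 (norm (of_zvec a))"
  let ?F = "{x \<in> lattice_shell a e s R. japanese_bracket (of_zvec x + of_zvec a) \<le> 2 ^ k}"
  have "real (card ?F) \<le> real (card (lattice_shell (- a) e (e * s) (2 ^ k)))"
    using card_lattice_shell_japanese_le[OF e] by simp
  also have "\<dots> \<le> 294912 * ((2 ^ k)\<^sup>2 + (2 ^ k) ^ 3 / ?m)"
    using card_lattice_shell_le_max[OF e, of "2 ^ k" "- a"] by simp
  finally have "(2 ^ k) powr (-1) * real (card ?F) \<le> (1 / 2 ^ k) * (294912 * ((2 ^ k)\<^sup>2 + (2 ^ k) ^ 3 / ?m))"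
    by (simp add: powr_minus divide_inverse mult_left_mono)
  also have "\<dots> = 294912 * (2 ^ k + (2 ^ k)\<^sup>2 / ?m)"
    by (simp add: power2_eq_square power3_eq_cube field_simps)
  also have "((2::real) ^ k)\<^sup>2 = 4 ^ k"
    by (simp add: power2_eq_square flip: power_mult_distrib)
  finally show ?thesis .
qed

lemma sum_pow2_pow4_le:
  fixes R m :: real
  assumes R: "1 \<le> R" and m: "1 \<le> m" "m \<le> 2 * R" and K: "2 ^ K \<le> 8 * R"
  shows "(\<Sum>k\<le>K. 2 ^ k + 4 ^ k / m) \<le> 160 * R\<^sup>2 / m"
proof -
  have "(\<Sum>k\<le>K. 2 ^ k + 4 ^ k / m) = (\<Sum>k\<le>K. (2::real) ^ k) + (\<Sum>k\<le>K. (4::real) ^ k) / m"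
    by (simp add: sum.distrib sum_divide_distrib)
  also have "\<dots> \<le> 2 * 2 ^ K + 2 * 4 ^ K / m"
    using sum_power_le_twice_last[of 2 K] sum_power_le_twice_last[of 4 K] m
    by (intro add_mono divide_right_mono) auto
  also have "2 * 2 ^ K \<le> 32 * R\<^sup>2 / m"
  proof -
    have "2 * 2 ^ K \<le> 16 * R"
      using K by simp
    also have "\<dots> \<le> 32 * R\<^sup>2 / m"
      using m R by (simp add: field_simps power2_eq_square)
    finally show ?thesis .
  qed
  also have "2 * 4 ^ K / m \<le> 128 * R\<^sup>2 / m"
  proof -
    have "(4::real) ^ K = (2 ^ K)\<^sup>2"
      by (simp add: power2_eq_square flip: power_mult_distrib)
    also have "\<dots> \<le> (8 * R)\<^sup>2"
      using K by (intro power_mono) auto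
    finally show ?thesis
      using m by (intro divide_right_mono) (auto simp: power2_eq_square)
  qed
  finally show ?thesis
    by (simp add: add_divide_distrib[symmetric])
qed

lemma sum_inv_japanese_lattice_shell_le_near:
  assumes e: "e = 1 \<or> e = -1" and R: "1 \<le> R" and near: "norm (of_zvec a) \<le> 2 * R"
  shows "(\<Sum>x\<in>lattice_shell a e s R. 1 / japanese_bracket (of_zvec x + of_zvec a))
    \<le> 94371840 * R\<^sup>2 / max 1 (norm (of_zvec a))"
proof -
  let ?m = "max 1 (norm (of_zvec a))"
  let ?J = "\<lambda>x. japanese_bracket (of_zvec x + of_zvec a)"
  obtain K where K: "4 * R \<le> 2 ^ K" "(2::real) ^ K \<le> 8 * R"
    using exists_pow2_between[of "4 * R"] R by auto
  have range: "1 \<le> ?J x \<and> ?J x \<le> 2 ^ K" if "x \<in> lattice_shell a e s R" for x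
  proof -
    have "?J x \<le> 1 + (norm (of_zvec x) + norm (of_zvec a))"
      using japanese_bracket_le_1_plus_norm[of "of_zvec x + of_zvec a"]
        norm_triangle_ineq[of "of_zvec x" "of_zvec a"] by linarith
    then show ?thesis
      using that near R K japanese_bracket_ge_1 by (auto simp: lattice_shell_def)
  qed
  have "(\<Sum>x\<in>lattice_shell a e s R. 1 / ?J x) = (\<Sum>x\<in>lattice_shell a e s R. ?J x powr (-1))"
    by (simp add: powr_minus divide_inverse abs_of_pos japanese_bracket_pos)
  also have "\<dots>
      \<le> 2 powr 1 * (\<Sum>k\<le>K. (2 ^ k) powr (-1) * real (card {x \<in> lattice_shell a e s R. ?J x \<le> 2 ^ k}))"
    by (rule sum_powr_le_dyadic_counts[OF finite_lattice_shell _ range]) simp_all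
  also have "\<dots> \<le> 2 * (\<Sum>k\<le>K. 294912 * (2 ^ k + 4 ^ k / ?m))"
    using card_lattice_shell_japanese_le_pow2[OF e] by (simp add: sum_mono)
  also have "\<dots> = 589824 * (\<Sum>k\<le>K. 2 ^ k + 4 ^ k / ?m)"
    by (simp add: sum_distrib_left)
  also have "\<dots> \<le> 589824 * (160 * R\<^sup>2 / ?m)"
    using sum_pow2_pow4_le[OF R _ _ K(2)] near R by (intro mult_left_mono) auto
  finally show ?thesis
    by simp
qed

lemma sum_inv_japanese_lattice_shell_le:
  assumes e: "e = 1 \<or> e = -1" and R: "1 \<le> R"
  shows "(\<Sum>x\<in>lattice_shell a e s R. 1 / japanese_bracket (of_zvec x + of_zvec a))
    \<le> 94371840 * R\<^sup>2 / max 1 (norm (of_zvec a))"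
proof (cases "norm (of_zvec a) \<le> 2 * R")
  case True
  then show ?thesis
    by (rule sum_inv_japanese_lattice_shell_le_near[OF e R])
next
  case False
  then have "(\<Sum>x\<in>lattice_shell a e s R. 1 / japanese_bracket (of_zvec x + of_zvec a))
      \<le> 884736 * R\<^sup>2 / max 1 (norm (of_zvec a))"
    by (intro sum_inv_japanese_lattice_shell_le_far[OF e R]) simp
  also have "\<dots> \<le> 94371840 * R\<^sup>2 / max 1 (norm (of_zvec a))"
    by (intro divide_right_mono) auto
  finally show ?thesis .
qed

lemma card_lattice_japanese_le:
  assumes "1 \<le> T"
  shows "finite {x. japanese_bracket (of_zvec x + of_zvec b) \<le> T}"
    "real (card {x. japanese_bracket (of_zvec x + of_zvec b) \<le> T}) \<le> 27 * T ^ 3"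
proof -
  let ?S = "{x. japanese_bracket (of_zvec x + of_zvec b) \<le> T}"
  have sub: "(\<lambda>x. x + b) ` ?S \<subseteq> {y. norm (of_zvec y) \<le> T}"
    using norm_le_japanese_bracket order_trans by fastforce
  have inj: "inj_on (\<lambda>x. x + b) ?S"
    by (auto intro: inj_onI)
  show "finite ?S"
    using finite_subset[OF sub finite_lattice_ball] finite_image_iff[OF inj] by blast
  have "card ?S \<le> card {y. norm (of_zvec y) \<le> T}"
    using card_inj_on_le[OF inj sub finite_lattice_ball] .
  then show "real (card ?S) \<le> 27 * T ^ 3"
    using card_lattice_ball_le[OF assms] by linarith
qed

lemma sum_japanese_powr_le_pow2:
  fixes b :: zvec
  assumes \<rho>: "0 \<le> \<rho>" "\<rho> \<le> 2"
  shows "(\<Sum>x\<in>{x. japanese_bracket (of_zvec x + of_zvec b) \<le> 2 ^ K}.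
      japanese_bracket (of_zvec x + of_zvec b) powr (-\<rho>))
    \<le> 54 * 2 powr \<rho> * (2 ^ K) powr (3 - \<rho>)"
proof -
  let ?J = "\<lambda>x. japanese_bracket (of_zvec x + of_zvec b)"
  define q where "q = (2::real) powr (3 - \<rho>)"
  have q: "2 \<le> q"
    unfolding q_def using powr_mono[of 1 "3 - \<rho>" 2] \<rho> by simp
  have pow2_powr: "((2::real) ^ k) powr (3 - \<rho>) = q ^ k" for k
    unfolding q_def by (simp add: powr_realpow[symmetric] powr_powr powr_power mult.commute)
  have count: "(2 ^ k) powr (-\<rho>) * real (card {x \<in> {x. ?J x \<le> 2 ^ K}. ?J x \<le> 2 ^ k}) \<le> 27 * q ^ k" for k
  proof -
    have "card {x \<in> {x. ?J x \<le> 2 ^ K}. ?J x \<le> 2 ^ k} \<le> card {x. ?J x \<le> 2 ^ k}"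
      using card_lattice_japanese_le(1)[of "2 ^ k" b] by (intro card_mono) auto
    then have "(2 ^ k) powr (-\<rho>) * real (card {x \<in> {x. ?J x \<le> 2 ^ K}. ?J x \<le> 2 ^ k})
        \<le> (2 ^ k) powr (-\<rho>) * (27 * (2 ^ k) ^ 3)"
      using card_lattice_japanese_le(2)[of "2 ^ k" b] by (intro mult_left_mono) auto
    also have "\<dots> = 27 * ((2 ^ k) powr (3 - \<rho>))"
      by (simp add: powr_diff powr_minus divide_inverse powr_realpow)
    finally show ?thesis
      by (simp add: pow2_powr)
  qed
  have "(\<Sum>x\<in>{x. ?J x \<le> 2 ^ K}. ?J x powr (-\<rho>))
      \<le> 2 powr \<rho> * (\<Sum>k\<le>K. (2 ^ k) powr (-\<rho>) * real (card {x \<in> {x. ?J x \<le> 2 ^ K}. ?J x \<le> 2 ^ k}))"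
    using card_lattice_japanese_le(1)[of "2 ^ K" b] \<rho> japanese_bracket_ge_1
    by (intro sum_powr_le_dyadic_counts) auto
  also have "\<dots> \<le> 2 powr \<rho> * (\<Sum>k\<le>K. 27 * q ^ k)"
    by (intro mult_left_mono sum_mono count) simp
  also have "\<dots> \<le> 2 powr \<rho> * (27 * (2 * q ^ K))"
    using sum_power_le_twice_last[OF q, of K] by (simp add: sum_distrib_left[symmetric])
  finally show ?thesis
    by (simp add: pow2_powr)
qed

lemma sum_japanese_powr_lattice_ball_le:
  fixes b :: zvec
  assumes \<rho>: "0 \<le> \<rho>" "\<rho> \<le> 2" and r: "1 \<le> r"
  shows "(\<Sum>x\<in>{x. norm (of_zvec x) \<le> r}. japanese_bracket (of_zvec x + of_zvec b) powr (-\<rho>))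
    \<le> 459 * r powr (3 - \<rho>)"
proof -
  define F where "F = {x. norm (of_zvec x) \<le> r}"
  define f where "f x = japanese_bracket (of_zvec x + of_zvec b) powr (-\<rho>)" for x
  obtain K where K: "r \<le> 2 ^ K" "(2::real) ^ K \<le> 2 * r"
    using exists_pow2_between[OF r] by auto
  let ?near = "{x. japanese_bracket (of_zvec x + of_zvec b) \<le> 2 ^ K}"
  have F: "finite F" "real (card F) \<le> 27 * r ^ 3"
    unfolding F_def using finite_lattice_ball card_lattice_ball_le[OF r] by auto
  have "sum f F = sum f (F \<inter> ?near) + sum f (F - ?near)"
    by (rule sum.Int_Diff[OF F(1)])
  also have "sum f (F \<inter> ?near) \<le> sum f ?near"
    using card_lattice_japanese_le(1)[of "2 ^ K" b] by (intro sum_mono2) (auto simp: f_def)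
  also have "\<dots> \<le> 54 * 2 powr \<rho> * (2 ^ K) powr (3 - \<rho>)"
    unfolding f_def by (rule sum_japanese_powr_le_pow2[OF \<rho>])
  also have "\<dots> \<le> 54 * 2 powr \<rho> * (2 * r) powr (3 - \<rho>)"
    using K \<rho> by (intro mult_left_mono powr_mono2) auto
  also have "\<dots> = 432 * r powr (3 - \<rho>)"
    using r by (simp add: powr_mult powr_add[symmetric])
  also have "sum f (F - ?near) \<le> real (card F) * r powr (-\<rho>)"
  proof -
    have "sum f (F - ?near) \<le> (\<Sum>x\<in>F - ?near. r powr (-\<rho>))"
    proof (rule sum_mono)
      fix x assume "x \<in> F - ?near"
      then have "r \<le> japanese_bracket (of_zvec x + of_zvec b)"
        using K by auto
      then show "f x \<le> r powr (-\<rho>)"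
        unfolding f_def using r \<rho> by (intro powr_mono2') auto
    qed
    also have "\<dots> \<le> real (card F) * r powr (-\<rho>)"
      using F(1) by (simp add: card_mono mult_right_mono)
    finally show ?thesis .
  qed
  also have "real (card F) * r powr (-\<rho>) \<le> 27 * r powr (3 - \<rho>)"
    using F(2) r by (auto intro!: mult_right_mono simp: powr_diff powr_minus divide_inverse powr_realpow)
  finally show ?thesis
    unfolding F_def f_def by simp
qed

section \<open>The resonant sum\<close>

lemma dyadic_ge_1: "dyadic N \<Longrightarrow> 1 \<le> N"
  unfolding dyadic_def by auto

lemma sim_imp_norm_le:
  assumes "1 \<le> c" "1 \<le> N" "sim c x N"
  shows "norm (of_zvec x) \<le> c * N"
  using assms unfolding sim_def znorm_eq_norm_of_zvec by (auto split: if_splits)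

lemma sim_imp_le_japanese_bracket:
  assumes c: "1 \<le> c" and "1 \<le> N" "sim c x N"
  shows "N \<le> c * japanese_bracket (of_zvec x)"
proof (cases "N = 1")
  case True
  have "1 * 1 \<le> c * japanese_bracket (of_zvec x)"
    by (rule mult_mono) (use c japanese_bracket_ge_1 in auto)
  then show ?thesis
    using True by simp
next
  case False
  then have "N \<le> c * norm (of_zvec x)"
    using assms unfolding sim_def znorm_eq_norm_of_zvec by (simp add: field_simps)
  also have "\<dots> \<le> c * japanese_bracket (of_zvec x)"
    using c norm_le_japanese_bracket by (intro mult_left_mono) auto
  finally show ?thesis .
qed

lemma jbr_powr_minus_2_le:
  assumes "1 \<le> c" "1 \<le> N" "sim c x N"
  shows "jbr x powr (-2) \<le> c\<^sup>2 / N\<^sup>2"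
proof -
  have J: "0 < japanese_bracket (of_zvec x)"
    by (rule japanese_bracket_pos)
  have "N\<^sup>2 \<le> (c * japanese_bracket (of_zvec x))\<^sup>2"
    using sim_imp_le_japanese_bracket[OF assms] assms(2) by (intro power_mono) auto
  then have "1 / (japanese_bracket (of_zvec x))\<^sup>2 \<le> c\<^sup>2 / N\<^sup>2"
    using J assms(2) by (simp add: field_simps power_mult_distrib)
  then show ?thesis
    using J by (simp add: jbr_eq_japanese_bracket powr_minus divide_inverse)
qed

lemma resonant_summand_le:
  fixes \<beta> \<delta> c N1 N2 N3 M :: real and n1 n2 n3 :: zvec
  assumes c: "1 \<le> c" and N: "1 \<le> N1" "1 \<le> N2" "1 \<le> N3" and M: "N1 \<le> M" "N2 \<le> M" "N3 \<le> M"
    and \<delta>: "0 < \<delta>" and sim: "sim c n1 N1" "sim c n2 N2" "sim c n3 N3"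
  shows "jbr (vadd (vadd n1 n2) n3) powr (2 * ((1/2 + \<delta>) - 1)) * jbr (vadd n1 n2) powr (-2 * \<beta>)
      * jbr n1 powr (-2) * jbr n3 powr (-2)
    \<le> (4 * c * M) powr (2 * \<delta>) * (c\<^sup>2 / N1\<^sup>2) * (c\<^sup>2 / N3\<^sup>2)
      * (japanese_bracket (of_zvec (n1 + n2)) powr (-2 * \<beta>)
         / japanese_bracket (of_zvec n3 + of_zvec (n1 + n2)))"
proof -
  define J where "J = japanese_bracket (of_zvec n3 + of_zvec (n1 + n2))"
  have J: "0 < J"
    unfolding J_def by (rule japanese_bracket_pos)
  have "J \<le> 1 + (norm (of_zvec n3) + (norm (of_zvec n1) + norm (of_zvec n2)))"
    using japanese_bracket_le_1_plus_norm[of "of_zvec n3 + of_zvec (n1 + n2)"]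
      norm_triangle_ineq[of "of_zvec n3" "of_zvec (n1 + n2)"] norm_triangle_ineq[of "of_zvec n1" "of_zvec n2"]
    unfolding J_def by simp
  also have "\<dots> \<le> 1 + 3 * (c * M)"
    using sim_imp_norm_le[OF c N(1) sim(1)] sim_imp_norm_le[OF c N(2) sim(2)] sim_imp_norm_le[OF c N(3) sim(3)]
      mult_left_mono[OF M(1), of c] mult_left_mono[OF M(2), of c] mult_left_mono[OF M(3), of c] c
    by linarith
  also have "\<dots> \<le> 4 * c * M"
  proof -
    have "1 * 1 \<le> c * M"
      by (rule mult_mono) (use c N M in auto)
    then show ?thesis
      by (simp add: mult.commute)
  qed
  finally have J_le: "J \<le> 4 * c * M" .
  have "2 * ((1/2 + \<delta>) - 1) = 2 * \<delta> - 1"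
    by simp
  then have "J powr (2 * ((1/2 + \<delta>) - 1)) = J powr (2 * \<delta>) / J powr 1"
    by (simp only: powr_diff)
  also have "\<dots> \<le> (4 * c * M) powr (2 * \<delta>) / J"
    using J J_le \<delta> by (simp add: powr_one[OF less_imp_le[OF J]] divide_right_mono powr_mono2)
  finally have A: "J powr (2 * ((1/2 + \<delta>) - 1)) \<le> (4 * c * M) powr (2 * \<delta>) / J" .
  define P where "P = japanese_bracket (of_zvec (n1 + n2)) powr (-2 * \<beta>)"
  have "jbr (vadd (vadd n1 n2) n3) = J" "jbr (vadd n1 n2) powr (-2 * \<beta>) = P"
    unfolding J_def P_def jbr_eq_japanese_bracket vadd_eq_plus by (simp_all add: add_ac)
  moreover have "J powr (2 * ((1/2 + \<delta>) - 1)) * P * jbr n1 powr (-2) * jbr n3 powr (-2)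
      \<le> ((4 * c * M) powr (2 * \<delta>) / J) * P * (c\<^sup>2 / N1\<^sup>2) * (c\<^sup>2 / N3\<^sup>2)"
    using A jbr_powr_minus_2_le[OF c N(1) sim(1)] jbr_powr_minus_2_le[OF c N(3) sim(3)] J
    by (intro mult_mono) (auto simp: P_def)
  ultimately show ?thesis
    by (simp add: P_def J_def mult_ac)
qed

lemma phase_level_imp_mem_lattice_shell:
  assumes e: "e123 \<in> {1, -1}" "e3 \<in> {1, -1}"
    and level: "\<bar>phase e123 e1 e2 e3 n1 n2 n3 - real_of_int m\<bar> \<le> 1" and n3: "norm (of_zvec n3) \<le> R"
  shows "n3 \<in> lattice_shell (n1 + n2) (e123 * e3) (e3 * (real_of_int m - e1 * jbr n1 - e2 * jbr n2)) R"
proof -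
  define X where "X = japanese_bracket (of_zvec n3 + of_zvec (n1 + n2))"
  define Y where "Y = japanese_bracket (of_zvec n3)"
  have "phase e123 e1 e2 e3 n1 n2 n3 = e123 * X + e1 * jbr n1 + e2 * jbr n2 + e3 * Y"
    unfolding phase_def X_def Y_def jbr_eq_japanese_bracket vadd_eq_plus by (simp add: add_ac)
  then have "Y + (e123 * e3) * X - e3 * (real_of_int m - e1 * jbr n1 - e2 * jbr n2)
      = e3 * (phase e123 e1 e2 e3 n1 n2 n3 - real_of_int m)"
    using e(2) by (auto simp: algebra_simps)
  then have "\<bar>Y + (e123 * e3) * X - e3 * (real_of_int m - e1 * jbr n1 - e2 * jbr n2)\<bar> \<le> 1"
    using e(2) level by (auto simp: abs_mult)
  then show ?thesis
    using n3 by (simp add: lattice_shell_def X_def Y_def)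
qed

lemma sum_le_sum_Sigma:
  fixes f g :: "'a \<times> 'b \<Rightarrow> real"
  assumes "finite A" "\<And>a. a \<in> A \<Longrightarrow> finite (B a)" "S \<subseteq> Sigma A B"
    and "\<And>p. p \<in> S \<Longrightarrow> f p \<le> g p" "\<And>p. p \<in> Sigma A B \<Longrightarrow> 0 \<le> g p"
  shows "sum f S \<le> (\<Sum>a\<in>A. \<Sum>b\<in>B a. g (a, b))"
proof -
  have "sum f S \<le> sum g S"
    using assms(4) by (rule sum_mono)
  also have "\<dots> \<le> sum g (Sigma A B)"
    using assms by (intro sum_mono2) auto
  also have "\<dots> = (\<Sum>a\<in>A. \<Sum>b\<in>B a. g (a, b))"
    by (subst sum.Sigma) (use assms(1,2) in auto)
  finally show ?thesis .
qed

lemma sum_lattice_shell_weight_le: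
  assumes e: "e = 1 \<or> e = -1" and R: "1 \<le> R"
  shows "(\<Sum>x\<in>lattice_shell a e s R.
      japanese_bracket (of_zvec a) powr (-2 * \<beta>) / japanese_bracket (of_zvec x + of_zvec a))
    \<le> 94371840 * sqrt 2 * R\<^sup>2 * japanese_bracket (of_zvec a) powr (-(1 + 2 * \<beta>))"
proof -
  let ?P = "japanese_bracket (of_zvec a) powr (-2 * \<beta>)"
  have "(\<Sum>x\<in>lattice_shell a e s R. ?P / japanese_bracket (of_zvec x + of_zvec a))
      = ?P * (\<Sum>x\<in>lattice_shell a e s R. 1 / japanese_bracket (of_zvec x + of_zvec a))"
    by (simp add: sum_distrib_left)
  also have "\<dots> \<le> ?P * (94371840 * R\<^sup>2 / max 1 (norm (of_zvec a)))"
    by (intro mult_left_mono sum_inv_japanese_lattice_shell_le[OF e R]) simp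
  also have "\<dots> = 94371840 * R\<^sup>2 * (?P / max 1 (norm (of_zvec a)))"
    by simp
  also have "\<dots> \<le> 94371840 * R\<^sup>2 * (sqrt 2 * japanese_bracket (of_zvec a) powr (-(1 + 2 * \<beta>)))"
    by (intro mult_left_mono japanese_bracket_powr_div_max_le) simp
  finally show ?thesis
    by (simp add: mult_ac)
qed

lemma powr_decay_le:
  fixes N1 N2 \<beta> \<gamma> :: real
  assumes "1 \<le> N1" "1 \<le> N2" "0 \<le> \<gamma>" "\<gamma> \<le> \<beta>"
  shows "N1 powr (-2 * \<beta>) \<le> N1 powr (-2 * \<gamma>) * N2 powr (2 * \<gamma>)"
proof -
  have "N1 powr (-2 * \<beta>) \<le> N1 powr (-2 * \<gamma>)"
    using assms by (intro powr_mono) auto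
  also have "\<dots> \<le> N1 powr (-2 * \<gamma>) * N2 powr (2 * \<gamma>)"
    using assms ge_one_powr_ge_zero[of N2 "2 * \<gamma>"] by (simp add: mult_le_cancel_left1)
  finally show ?thesis .
qed

lemma sum_lattice_ball_shell_weight_le:
  assumes e: "e = 1 \<or> e = -1" and \<beta>: "0 \<le> \<beta>" "\<beta> \<le> 1/2" and R: "1 \<le> r" "1 \<le> R"
  shows "(\<Sum>x\<in>{x. norm (of_zvec x) \<le> r}. \<Sum>y\<in>lattice_shell (x + b) e (s x) R.
      japanese_bracket (of_zvec (x + b)) powr (-2 * \<beta>) / japanese_bracket (of_zvec y + of_zvec (x + b)))
    \<le> 94371840 * sqrt 2 * R\<^sup>2 * (459 * r powr (2 - 2 * \<beta>))"
proof -
  have "(\<Sum>x\<in>{x. norm (of_zvec x) \<le> r}. \<Sum>y\<in>lattice_shell (x + b) e (s x) R.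
      japanese_bracket (of_zvec (x + b)) powr (-2 * \<beta>) / japanese_bracket (of_zvec y + of_zvec (x + b)))
    \<le> (\<Sum>x\<in>{x. norm (of_zvec x) \<le> r}.
      94371840 * sqrt 2 * R\<^sup>2 * japanese_bracket (of_zvec x + of_zvec b) powr (-(1 + 2 * \<beta>)))"
  proof (rule sum_mono)
    fix x
    show "(\<Sum>y\<in>lattice_shell (x + b) e (s x) R.
        japanese_bracket (of_zvec (x + b)) powr (-2 * \<beta>) / japanese_bracket (of_zvec y + of_zvec (x + b)))
      \<le> 94371840 * sqrt 2 * R\<^sup>2 * japanese_bracket (of_zvec x + of_zvec b) powr (-(1 + 2 * \<beta>))"
      using sum_lattice_shell_weight_le[OF e R(2), where a = "x + b" and s = "s x" and \<beta> = \<beta>] by simp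
  qed
  also have "\<dots> = 94371840 * sqrt 2 * R\<^sup>2
      * (\<Sum>x\<in>{x. norm (of_zvec x) \<le> r}. japanese_bracket (of_zvec x + of_zvec b) powr (-(1 + 2 * \<beta>)))"
    by (simp only: sum_distrib_left)
  also have "\<dots> \<le> 94371840 * sqrt 2 * R\<^sup>2 * (459 * r powr (3 - (1 + 2 * \<beta>)))"
    using sum_japanese_powr_lattice_ball_le[of "1 + 2 * \<beta>" r b] \<beta> R(1)
    by (intro mult_left_mono) auto
  finally show ?thesis
    by (simp add: algebra_simps)
qed

lemma weighted_resonant_sum_le:
  fixes \<beta> \<gamma> \<delta> c N1 N2 N3 e123 e1 e2 e3 :: real and m :: int and n2 :: zvec
  assumes \<gamma>: "0 \<le> \<gamma>" "\<gamma> \<le> \<beta>" and \<beta>: "\<beta> \<le> 1/2" and \<delta>: "0 < \<delta>" and c: "1 \<le> c"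
    and N: "1 \<le> N1" "1 \<le> N2" "1 \<le> N3" and e: "e123 \<in> {1, -1}" "e3 \<in> {1, -1}"
    and n2: "sim c n2 N2"
  shows "(\<Sum>(n1, n3) \<in> {(n1, n3). sim c n1 N1 \<and> sim c n3 N3 \<and>
         \<bar>phase e123 e1 e2 e3 n1 n2 n3 - real_of_int m\<bar> \<le> 1}.
       jbr (vadd (vadd n1 n2) n3) powr (2 * ((1/2 + \<delta>) - 1))
       * jbr (vadd n1 n2) powr (-2 * \<beta>)
       * jbr n1 powr (-2) * jbr n3 powr (-2))
    \<le> (4 * c) powr (2 * \<delta>) * c ^ 6 * c powr (2 - 2 * \<beta>) * (94371840 * sqrt 2 * 459)
      * (max N1 (max N2 N3)) powr (2 * \<delta>) * N1 powr (-2 * \<gamma>) * N2 powr (2 * \<gamma>)"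
proof -
  define M where "M = max N1 (max N2 N3)"
  have M: "N1 \<le> M" "N2 \<le> M" "N3 \<le> M"
    unfolding M_def by auto
  have cN: "1 \<le> c * N1" "1 \<le> c * N3"
    using c N mult_mono[of 1 c 1 N1] mult_mono[of 1 c 1 N3] by auto
  have e': "e123 * e3 = 1 \<or> e123 * e3 = -1"
    using e by auto
  define Cst where "Cst = (4 * c * M) powr (2 * \<delta>) * (c\<^sup>2 / N1\<^sup>2) * (c\<^sup>2 / N3\<^sup>2)"
  define s where "s n1 = e3 * (real_of_int m - e1 * jbr n1 - e2 * jbr n2)" for n1
  define g where "g = (\<lambda>(n1, n3). Cst * (japanese_bracket (of_zvec (n1 + n2)) powr (-2 * \<beta>)
      / japanese_bracket (of_zvec n3 + of_zvec (n1 + n2))))"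
  have "(\<Sum>(n1, n3) \<in> {(n1, n3). sim c n1 N1 \<and> sim c n3 N3 \<and>
         \<bar>phase e123 e1 e2 e3 n1 n2 n3 - real_of_int m\<bar> \<le> 1}.
       jbr (vadd (vadd n1 n2) n3) powr (2 * ((1/2 + \<delta>) - 1)) * jbr (vadd n1 n2) powr (-2 * \<beta>)
       * jbr n1 powr (-2) * jbr n3 powr (-2))
      \<le> (\<Sum>n1\<in>{x. norm (of_zvec x) \<le> c * N1}.
          \<Sum>n3\<in>lattice_shell (n1 + n2) (e123 * e3) (s n1) (c * N3). g (n1, n3))"
  proof (rule sum_le_sum_Sigma)
    show "{(n1, n3). sim c n1 N1 \<and> sim c n3 N3 \<and> \<bar>phase e123 e1 e2 e3 n1 n2 n3 - real_of_int m\<bar> \<le> 1}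
        \<subseteq> Sigma {x. norm (of_zvec x) \<le> c * N1} (\<lambda>n1. lattice_shell (n1 + n2) (e123 * e3) (s n1) (c * N3))"
      using sim_imp_norm_le[OF c N(1)] sim_imp_norm_le[OF c N(3)]
      by (auto simp: s_def intro!: phase_level_imp_mem_lattice_shell[OF e])
    show "0 \<le> g p" for p
      by (auto simp: g_def Cst_def japanese_bracket_pos less_imp_le split: prod.split)
  qed (use resonant_summand_le[OF c N M \<delta> _ n2]
      in \<open>auto simp: g_def Cst_def finite_lattice_ball finite_lattice_shell\<close>)
  also have "\<dots> = Cst * (\<Sum>n1\<in>{x. norm (of_zvec x) \<le> c * N1}.
      \<Sum>n3\<in>lattice_shell (n1 + n2) (e123 * e3) (s n1) (c * N3).
        japanese_bracket (of_zvec (n1 + n2)) powr (-2 * \<beta>) / japanese_bracket (of_zvec n3 + of_zvec (n1 + n2)))"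
    by (simp add: g_def sum_distrib_left)
  also have "\<dots> \<le> Cst * (94371840 * sqrt 2 * (c * N3)\<^sup>2 * (459 * (c * N1) powr (2 - 2 * \<beta>)))"
    by (intro mult_left_mono sum_lattice_ball_shell_weight_le[OF e' _ \<beta> cN])
      (use \<gamma> in \<open>simp_all add: Cst_def\<close>)
  also have "\<dots> = (4 * c) powr (2 * \<delta>) * c ^ 6 * c powr (2 - 2 * \<beta>) * (94371840 * sqrt 2 * 459)
      * M powr (2 * \<delta>) * N1 powr (-2 * \<beta>)"
  proof -
    have "(4 * c * M) powr (2 * \<delta>) = (4 * c) powr (2 * \<delta>) * M powr (2 * \<delta>)"
      using c by (simp add: powr_mult)
    moreover have "(c * N1) powr (2 - 2 * \<beta>) = c powr (2 - 2 * \<beta>) * (N1\<^sup>2 * N1 powr (-2 * \<beta>))"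
      using c N by (simp add: powr_mult powr_diff powr_minus_divide)
    ultimately show ?thesis
      using N unfolding Cst_def by (simp add: field_simps power2_eq_square eval_nat_numeral)
  qed
  also have "\<dots> \<le> (4 * c) powr (2 * \<delta>) * c ^ 6 * c powr (2 - 2 * \<beta>) * (94371840 * sqrt 2 * 459)
      * M powr (2 * \<delta>) * (N1 powr (-2 * \<gamma>) * N2 powr (2 * \<gamma>))"
    using powr_decay_le[OF N(1,2) \<gamma>] c by (intro mult_left_mono) simp_all
  finally show ?thesis
    unfolding M_def by (simp only: mult.assoc)
qed

theorem lemma4p23:
  fixes \<beta> \<delta>\<^sub>2 \<gamma> c :: real
  assumes "0 < \<beta>" "\<beta> < 1/2" "0 < \<delta>\<^sub>2" "0 < \<gamma>" "\<gamma> < \<beta>" "1 \<le> c"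
  shows "\<exists>C>0. \<forall>N123 N1 N2 N3 (m::int) e123 e1 e2 e3 (n2::zvec).
    dyadic N123 \<longrightarrow> dyadic N1 \<longrightarrow> dyadic N2 \<longrightarrow> dyadic N3 \<longrightarrow>
    e123 \<in> {1, -1} \<longrightarrow> e1 \<in> {1, -1} \<longrightarrow> e2 \<in> {1, -1} \<longrightarrow> e3 \<in> {1, -1} \<longrightarrow>
    sim c n2 N2 \<longrightarrow>
    (\<Sum>(n1, n3) \<in> {(n1, n3). sim c n1 N1 \<and> sim c n3 N3 \<and>
         \<bar>phase e123 e1 e2 e3 n1 n2 n3 - real_of_int m\<bar> \<le> 1}.
       jbr (vadd (vadd n1 n2) n3) powr (2 * ((1/2 + \<delta>\<^sub>2) - 1))
       * jbr (vadd n1 n2) powr (-2 * \<beta>)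
       * jbr n1 powr (-2) * jbr n3 powr (-2))
    \<le> C * (max N1 (max N2 N3)) powr (2 * \<delta>\<^sub>2) * N1 powr (-2 * \<gamma>) * N2 powr (2 * \<gamma>)"
proof -
  define C where "C = (4 * c) powr (2 * \<delta>\<^sub>2) * c ^ 6 * c powr (2 - 2 * \<beta>) * (94371840 * sqrt 2 * 459)"
  show ?thesis
  proof (intro exI[of _ C] conjI allI impI)
    show "0 < C"
      using assms(6) unfolding C_def by simp
  qed (unfold C_def, rule weighted_resonant_sum_le; use assms dyadic_ge_1 in auto)
qed

end
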